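(* $rx_3(K_{2,t})=4$ for every $5\leq t\leq 8$, and $rx_3(K_{2,t})\geq 5$ for every $t\geq 9$.
   Context: An edge coloring of a graph $G$ is any assignment of colors to the edges (adjacent edges may receive the same color). A tree $T$ in an edge-colored graph is a rainbow tree if no two edges of $T$ have the same color. For $S\subseteq V(G)$, an $S$-tree is a subtree of $G$ containing all vertices of $S$. A $3$-rainbow coloring of $G$ is an edge coloring such that for every set $S$ of $3$ vertices of $G$ there is a rainbow $S$-tree in $G$. The $3$-rainbow index $rx_3(G)$ is the minimum number of colors in a $3$-rainbow coloring of $G$. $K_{2,t}$ denotes the complete bipartite graph with parts of sizes $2$ and $t$. *)

theory Defs
  imports Main
begin

type_synonym 'a graph = "'a set \<times> 'a set set"

definition verts :: "'a graph \<Rightarrow> 'a set" where "verts G = fst G"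
definition edges :: "'a graph \<Rightarrow> 'a set set" where "edges G = snd G"

definition simple_graph :: "'a graph \<Rightarrow> bool" where
  "simple_graph G \<longleftrightarrow> finite (verts G) \<and>
     (\<forall>e\<in>edges G. \<exists>u v. e = {u, v} \<and> u \<noteq> v \<and> u \<in> verts G \<and> v \<in> verts G)"

definition subgraph :: "'a graph \<Rightarrow> 'a graph \<Rightarrow> bool" where
  "subgraph H G \<longleftrightarrow> verts H \<subseteq> verts G \<and> edges H \<subseteq> edges G \<and>
     (\<forall>e\<in>edges H. e \<subseteq> verts H)"

definition adj :: "'a graph \<Rightarrow> 'a \<Rightarrow> 'a \<Rightarrow> bool" where
  "adj G u v \<longleftrightarrow> {u, v} \<in> edges G \<and> u \<noteq> v"

definition connected_graph :: "'a graph \<Rightarrow> bool" where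
  "connected_graph G \<longleftrightarrow> verts G \<noteq> {} \<and>
     (\<forall>u\<in>verts G. \<forall>v\<in>verts G. (adj G)\<^sup>*\<^sup>* u v)"

definition is_cycle :: "'a graph \<Rightarrow> 'a list \<Rightarrow> bool" where
  "is_cycle G xs \<longleftrightarrow> length xs \<ge> 3 \<and> distinct xs \<and> set xs \<subseteq> verts G \<and>
     (\<forall>i. Suc i < length xs \<longrightarrow> adj G (xs ! i) (xs ! Suc i)) \<and>
     adj G (last xs) (hd xs)"

definition acyclic_graph :: "'a graph \<Rightarrow> bool" where
  "acyclic_graph G \<longleftrightarrow> (\<nexists>xs. is_cycle G xs)"

definition is_tree :: "'a graph \<Rightarrow> bool" where
  "is_tree T \<longleftrightarrow> simple_graph T \<and> connected_graph T \<and> acyclic_graph T"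

definition rainbow_S_tree :: "'a graph \<Rightarrow> ('a set \<Rightarrow> nat) \<Rightarrow> 'a set \<Rightarrow> 'a graph \<Rightarrow> bool" where
  "rainbow_S_tree G c S T \<longleftrightarrow> subgraph T G \<and> is_tree T \<and> S \<subseteq> verts T \<and>
     inj_on c (edges T)"

definition three_rainbow_coloring :: "'a graph \<Rightarrow> ('a set \<Rightarrow> nat) \<Rightarrow> bool" where
  "three_rainbow_coloring G c \<longleftrightarrow>
     (\<forall>S. S \<subseteq> verts G \<and> card S = 3 \<longrightarrow> (\<exists>T. rainbow_S_tree G c S T))"

definition rx3 :: "'a graph \<Rightarrow> nat" where
  "rx3 G = (LEAST k. \<exists>c. three_rainbow_coloring G c \<and> card (c ` edges G) = k)"

definition K2t :: "nat \<Rightarrow> nat graph" where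
  "K2t t = ({0..<t+2}, {{i, j} | i j. i \<in> {0,1} \<and> j \<in> {2..<t+2}})"

end

theory Submission
  imports Defs
begin

text \<open>Write \<open>a w\<close>, \<open>b w\<close> for the colours of the edges joining a leaf \<open>w\<close> of K_{2,t} to
  the centres 0 and 1. A rainbow tree through three leaves is either a star at one centre, so that
  \<open>a\<close> or \<open>b\<close> is injective on them, or it runs through both centres via a bridge leaf. If the
  bridge is one of the three leaves, its two edges and one edge at each other leaf carry four
  distinct colours; otherwise the tree has five edges. With three colours only stars remain, and
  counting bounds the number of leaves by 4. With four colours, a colour class of \<open>a\<close> with at
  least three leaves makes \<open>b\<close> injective on it and constant off it, which bounds the number of
  leaves by 8. Conversely, a 4-colouring of K_{2,8} restricts to K_{2,t}, and for
  \<open>5 \<le> t \<le> 8\<close> each triple of vertices is given a star or double star certificate by computation.\<close>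

section \<open>Trees obtained by attaching leaves\<close>

lemma adj_sym: "adj G u v \<Longrightarrow> adj G v u"
  unfolding adj_def by (metis insert_commute)

lemma simple_graph_edge_subset: "simple_graph G \<Longrightarrow> e \<in> edges G \<Longrightarrow> e \<subseteq> verts G"
  unfolding simple_graph_def by fastforce

lemma connected_graphI:
  assumes "r \<in> verts G" "\<And>v. v \<in> verts G \<Longrightarrow> (adj G)\<^sup>*\<^sup>* r v"
  shows "connected_graph G"
proof -
  have "symp (adj G)\<^sup>*\<^sup>*" by (intro symp_rtranclp sympI) (rule adj_sym)
  then have to_root: "(adj G)\<^sup>*\<^sup>* v r" if "v \<in> verts G" for v
    using assms(2)[OF that] by (rule sympD)
  show ?thesis
    unfolding connected_graph_def
  proof (intro conjI ballI)
    show "verts G \<noteq> {}" using assms(1) by blast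
    fix u v assume "u \<in> verts G" "v \<in> verts G"
    then show "(adj G)\<^sup>*\<^sup>* u v" by (rule rtranclp_trans[OF to_root assms(2)])
  qed
qed

lemma is_cycle_two_neighbours:
  assumes c: "is_cycle G xs" and v: "v \<in> set xs"
  obtains p q where "p \<noteq> q" "p \<in> set xs" "q \<in> set xs" "adj G v p" "adj G v q"
proof -
  let ?n = "length xs"
  have n3: "3 \<le> ?n" and d: "distinct xs" and step: "\<And>i. Suc i < ?n \<Longrightarrow> adj G (xs ! i) (xs ! Suc i)"
    using c unfolding is_cycle_def by auto
  have "xs \<noteq> []" using n3 by auto
  then have wrap: "adj G (xs ! (?n - 1)) (xs ! 0)"
    using c unfolding is_cycle_def by (simp add: hd_conv_nth last_conv_nth)
  define succ where "succ i = (if Suc i < ?n then Suc i else 0)" for i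
  define pred where "pred i = (if i = 0 then ?n - 1 else i - 1)" for i
  obtain i where i: "i < ?n" "v = xs ! i" using v by (metis in_set_conv_nth)
  have "adj G v (xs ! succ i)"
  proof (cases "Suc i < ?n")
    case False
    then have "i = ?n - 1" using i by linarith
    then show ?thesis using wrap False i unfolding succ_def by simp
  qed (use step i in \<open>simp add: succ_def\<close>)
  moreover have "adj G v (xs ! pred i)"
  proof (cases "i = 0")
    case False
    then have "adj G (xs ! pred i) v" using step[of "i - 1"] i unfolding pred_def by simp
    then show ?thesis by (rule adj_sym)
  next
    case True
    then show ?thesis using adj_sym[OF wrap] i unfolding pred_def by simp
  qed
  moreover have "succ i < ?n" "pred i < ?n" "succ i \<noteq> pred i"
    using i n3 unfolding succ_def pred_def by auto
  then have "xs ! succ i \<noteq> xs ! pred i" using d by (simp add: nth_eq_iff_index_eq)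
  ultimately show thesis
    using that \<open>succ i < ?n\<close> \<open>pred i < ?n\<close> by (meson nth_mem)
qed

definition attach_leaves :: "'a \<Rightarrow> 'a set \<Rightarrow> 'a graph \<Rightarrow> 'a graph" where
  "attach_leaves u B G = (verts G \<union> B, edges G \<union> (\<lambda>b. {u, b}) ` B)"

lemma verts_attach_leaves [simp]: "verts (attach_leaves u B G) = verts G \<union> B"
  and edges_attach_leaves [simp]: "edges (attach_leaves u B G) = edges G \<union> (\<lambda>b. {u, b}) ` B"
  unfolding attach_leaves_def verts_def edges_def by simp_all

lemma adj_attach_leaf:
  "u \<noteq> v \<Longrightarrow> adj (attach_leaves u {v} T) p q \<longleftrightarrow> adj T p q \<or> {p, q} = {u, v}"
  unfolding adj_def by auto

lemma connected_graph_attach_leaf: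
  assumes conn: "connected_graph T" and u: "u \<in> verts T" "u \<noteq> v"
  shows "connected_graph (attach_leaves u {v} T)"
proof (rule connected_graphI)
  let ?T' = "attach_leaves u {v} T"
  show "u \<in> verts ?T'" using u by simp
  have "adj T \<le> adj ?T'" by (auto simp: adj_attach_leaf[OF u(2)])
  then have mono: "(adj ?T')\<^sup>*\<^sup>* p q" if "(adj T)\<^sup>*\<^sup>* p q" for p q
    using that rtranclp_mono by (blast dest: predicate2D)
  fix w assume "w \<in> verts ?T'"
  then consider "w \<in> verts T" | "w = v" by auto
  then show "(adj ?T')\<^sup>*\<^sup>* u w"
  proof cases
    case 1
    then show ?thesis using conn u mono unfolding connected_graph_def by simp
  next
    case 2
    then show ?thesis by (auto simp: adj_attach_leaf[OF u(2)])
  qed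
qed

lemma acyclic_graph_attach_leaf:
  assumes simple: "simple_graph T" and acyc: "acyclic_graph T" and v: "v \<notin> verts T" "u \<noteq> v"
  shows "acyclic_graph (attach_leaves u {v} T)"
  unfolding acyclic_graph_def
proof
  let ?T' = "attach_leaves u {v} T"
  note adj_T' = adj_attach_leaf[OF v(2)]
  assume "\<exists>xs. is_cycle ?T' xs"
  then obtain xs where c: "is_cycle ?T' xs" by blast
  have "v \<notin> set xs"
  proof
    assume "v \<in> set xs"
    then obtain p q where "p \<noteq> q" "adj ?T' v p" "adj ?T' v q"
      by (rule is_cycle_two_neighbours[OF c])
    moreover have "{v, p} \<notin> edges T" for p using simple_graph_edge_subset[OF simple] v by blast
    ultimately show False unfolding adj_T' adj_def by (auto simp: doubleton_eq_iff)
  qed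
  then have same_adj: "adj ?T' p q \<longleftrightarrow> adj T p q" if "p \<in> set xs" "q \<in> set xs" for p q
    using that unfolding adj_T' by (auto simp: doubleton_eq_iff)
  have "xs \<noteq> []" using c unfolding is_cycle_def by auto
  then have "adj T (last xs) (hd xs)"
    using c same_adj[of "last xs" "hd xs"] unfolding is_cycle_def by simp
  moreover have "adj T (xs ! i) (xs ! Suc i)" if "Suc i < length xs" for i
    using c that same_adj[of "xs ! i" "xs ! Suc i"] unfolding is_cycle_def by simp
  moreover have "set xs \<subseteq> verts T"
    using c \<open>v \<notin> set xs\<close> unfolding is_cycle_def by auto
  ultimately have "is_cycle T xs"
    using c unfolding is_cycle_def by blast
  with acyc show False unfolding acyclic_graph_def by blast
qed

lemma is_tree_attach_leaf:
  assumes T: "is_tree T" and u: "u \<in> verts T" and v: "v \<notin> verts T"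
  shows "is_tree (attach_leaves u {v} T)"
proof -
  have simple: "simple_graph T" and conn: "connected_graph T" and acyc: "acyclic_graph T"
    using T unfolding is_tree_def by auto
  have uv: "u \<noteq> v" using u v by blast
  have "simple_graph (attach_leaves u {v} T)"
    using simple u v unfolding simple_graph_def by (simp; blast)
  moreover have "connected_graph (attach_leaves u {v} T)"
    by (rule connected_graph_attach_leaf[OF conn u uv])
  moreover have "acyclic_graph (attach_leaves u {v} T)"
    by (rule acyclic_graph_attach_leaf[OF simple acyc v uv])
  ultimately show ?thesis unfolding is_tree_def by blast
qed

lemma is_tree_attach_leaves:
  assumes "is_tree T" "u \<in> verts T" "finite B" "B \<inter> verts T = {}"
  shows "is_tree (attach_leaves u B T)"
  using assms(3,4)
proof (induction B rule: finite_induct)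
  case empty
  then show ?case using assms(1) by (simp add: attach_leaves_def verts_def edges_def)
next
  case (insert b B)
  have "attach_leaves u (insert b B) T = attach_leaves u {b} (attach_leaves u B T)"
    unfolding attach_leaves_def verts_def edges_def by auto
  moreover have "is_tree (attach_leaves u {b} (attach_leaves u B T))"
    using insert assms(2) by (intro is_tree_attach_leaf) auto
  ultimately show ?case by simp
qed

lemma is_tree_singleton: "is_tree ({x}, {})"
proof -
  have "\<not> is_cycle ({x}, {}) xs" for xs
  proof
    assume "is_cycle ({x}, {}) xs"
    then have "set xs \<subseteq> {x}" "distinct xs" "3 \<le> length xs"
      unfolding is_cycle_def verts_def by auto
    then show False using card_mono[of "{x}" "set xs"] distinct_card by fastforce
  qed
  moreover have "connected_graph ({x}, {})"
    by (rule connected_graphI[where r = x]) (auto simp: verts_def)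
  ultimately show ?thesis
    unfolding is_tree_def simple_graph_def acyclic_graph_def verts_def edges_def by auto
qed

definition star :: "'a \<Rightarrow> 'a set \<Rightarrow> 'a graph" where
  "star x A = attach_leaves x A ({x}, {})"

definition double_star :: "'a \<Rightarrow> 'a \<Rightarrow> 'a set \<Rightarrow> 'a set \<Rightarrow> 'a \<Rightarrow> 'a graph" where
  "double_star x y A B l = attach_leaves y B (attach_leaves l {y} (star x A))"

lemma verts_star [simp]: "verts (star x A) = insert x A"
  and edges_star [simp]: "edges (star x A) = (\<lambda>a. {x, a}) ` A"
  unfolding star_def attach_leaves_def by (auto simp: verts_def edges_def)

lemma is_tree_star: "finite A \<Longrightarrow> x \<notin> A \<Longrightarrow> is_tree (star x A)"
  unfolding star_def
  by (rule is_tree_attach_leaves[OF is_tree_singleton]) (auto simp: verts_def)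

lemma is_tree_double_star:
  assumes "finite A" "finite B" "x \<notin> A" "l \<in> insert x A" "y \<notin> insert x A"
    "B \<inter> insert x (insert y A) = {}"
  shows "is_tree (double_star x y A B l)"
  unfolding double_star_def using assms
  by (intro is_tree_attach_leaves is_tree_attach_leaf is_tree_star) auto

lemma subgraph_if_tree:
  assumes "is_tree T" "verts T \<subseteq> verts G" "edges T \<subseteq> edges G"
  shows "subgraph T G"
  using assms simple_graph_edge_subset unfolding subgraph_def is_tree_def by blast

lemma three_rainbow_coloring_if_spanning_tree:
  assumes "is_tree T" "subgraph T G" "verts T = verts G" "inj_on c (edges G)"
  shows "three_rainbow_coloring G c"
proof -
  have "inj_on c (edges T)"
    using assms(2,4) unfolding subgraph_def by (blast intro: inj_on_subset)
  then have "rainbow_S_tree G c S T" if "S \<subseteq> verts G" for S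
    using assms that unfolding rainbow_S_tree_def by auto
  then show ?thesis unfolding three_rainbow_coloring_def by blast
qed

lemma rx3_le: "three_rainbow_coloring G c \<Longrightarrow> rx3 G \<le> card (c ` edges G)"
  unfolding rx3_def by (rule Least_le) blast

lemma le_rx3:
  assumes "three_rainbow_coloring G c"
    and "\<And>c. three_rainbow_coloring G c \<Longrightarrow> k \<le> card (c ` edges G)"
  shows "k \<le> rx3 G"
proof -
  have "\<exists>c. three_rainbow_coloring G c \<and> card (c ` edges G) = rx3 G"
    unfolding rx3_def by (rule LeastI_ex) (use assms(1) in blast)
  then show ?thesis using assms(2) by metis
qed

lemma K2t_verts: "verts (K2t t) = {0..<t+2}"
  unfolding K2t_def verts_def by simp

lemma K2t_edges: "e \<in> edges (K2t t) \<longleftrightarrow> (\<exists>s v. e = {s, v} \<and> s \<le> 1 \<and> 2 \<le> v \<and> v < t+2)"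
  unfolding K2t_def edges_def by (force simp: le_Suc_eq)

lemma K2t_edgeI: "s \<le> 1 \<Longrightarrow> 2 \<le> v \<Longrightarrow> v < t+2 \<Longrightarrow> {s, v} \<in> edges (K2t t)"
  unfolding K2t_edges by blast

lemma finite_K2t_edges: "finite (edges (K2t t))"
proof -
  have "edges (K2t t) \<subseteq> Pow {0..<t+2}" by (auto simp: K2t_edges)
  then show ?thesis by (rule finite_subset) simp
qed

text \<open>\<open>Double_Star x A B l\<close>: the centre \<open>x\<close> is joined to the leaves \<open>A\<close>, the other centre
  \<open>1 - x\<close> to the leaves \<open>B\<close> and to the bridge leaf \<open>l \<in> A\<close>.\<close>
datatype shape = Star nat "nat list" | Double_Star nat "nat list" "nat list" nat

fun shape_graph :: "shape \<Rightarrow> nat graph" where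
  "shape_graph (Star x A) = star x (set A)"
| "shape_graph (Double_Star x A B l) = double_star x (1 - x) (set A) (set B) l"

fun shape_edges :: "shape \<Rightarrow> (nat \<times> nat) list" where
  "shape_edges (Star x A) = map (Pair x) A"
| "shape_edges (Double_Star x A B l) = map (Pair x) A @ [(1 - x, l)] @ map (Pair (1 - x)) B"

fun shape_verts :: "shape \<Rightarrow> nat list" where
  "shape_verts (Star x A) = x # A"
| "shape_verts (Double_Star x A B l) = x # (1 - x) # A @ B"

fun valid_shape :: "nat \<Rightarrow> shape \<Rightarrow> bool" where
  "valid_shape t (Star x A) \<longleftrightarrow> x \<le> 1 \<and> list_all (\<lambda>v. 2 \<le> v \<and> v < t+2) A"
| "valid_shape t (Double_Star x A B l) \<longleftrightarrow> x \<le> 1 \<and> list_all (\<lambda>v. 2 \<le> v \<and> v < t+2) (A @ B) \<and>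
     list_all (\<lambda>v. v \<notin> set B) A \<and> l \<in> set A"

lemma verts_shape_graph: "verts (shape_graph w) = set (shape_verts w)"
  by (cases w) (auto simp: double_star_def)

lemma edges_shape_graph: "edges (shape_graph w) = (\<lambda>(s, v). {s, v}) ` set (shape_edges w)"
  by (cases w) (auto simp: double_star_def)

lemma valid_shape_edges: "valid_shape t w \<Longrightarrow> (s, v) \<in> set (shape_edges w) \<Longrightarrow> s \<le> 1 \<and> 2 \<le> v \<and> v < t+2"
  by (cases w) (auto simp: list_all_iff)

lemma valid_shape_tree:
  assumes "valid_shape t w"
  shows "is_tree (shape_graph w) \<and> subgraph (shape_graph w) (K2t t)"
proof -
  have "is_tree (shape_graph w)"
  proof (cases w)
    case (Star x A)
    then show ?thesis using assms by (auto simp: list_all_iff intro!: is_tree_star)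
  next
    case (Double_Star x A B l)
    then have x: "x \<le> 1" and AB: "set A \<inter> set B = {}" "l \<in> set A"
      and leaf: "\<And>v. v \<in> set A \<union> set B \<Longrightarrow> 2 \<le> v"
      using assms by (auto simp: list_all_iff)
    have "x \<notin> set A \<union> set B" "1 - x \<notin> set A \<union> set B"
      using leaf[of x] leaf[of "1 - x"] x by arith+
    moreover have "1 - x \<noteq> x" using x by arith
    ultimately show ?thesis using Double_Star AB by (auto intro!: is_tree_double_star)
  qed
  moreover have "verts (shape_graph w) \<subseteq> verts (K2t t)"
    using assms unfolding verts_shape_graph K2t_verts by (cases w) (auto simp: list_all_iff)
  moreover have "edges (shape_graph w) \<subseteq> edges (K2t t)"
    using valid_shape_edges[OF assms] by (fastforce simp: edges_shape_graph K2t_edges)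
  ultimately show ?thesis using subgraph_if_tree by blast
qed

lemma ex_three_rainbow_coloring_K2t:
  assumes "1 \<le> t"
  obtains c where "three_rainbow_coloring (K2t t) c"
proof -
  let ?w = "Double_Star 0 [2..<t+2] [] 2"
  have "valid_shape t ?w" using assms by (auto simp: list_all_iff)
  moreover have "verts (shape_graph ?w) = verts (K2t t)"
    unfolding verts_shape_graph K2t_verts by auto
  moreover obtain c :: "nat set \<Rightarrow> nat" where "inj_on c (edges (K2t t))"
    using finite_imp_inj_to_nat_seg[OF finite_K2t_edges] by blast
  ultimately show thesis
    using that valid_shape_tree three_rainbow_coloring_if_spanning_tree by blast
qed

section \<open>A certified 4-colouring\<close>

definition pair_coloring :: "(nat \<Rightarrow> nat \<Rightarrow> nat) \<Rightarrow> nat set \<Rightarrow> nat" where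
  "pair_coloring col e = col (Min e) (Max e)"

lemma pair_coloring_doubleton: "s < v \<Longrightarrow> pair_coloring col {s, v} = col s v"
  unfolding pair_coloring_def by simp

definition rainbow_shape :: "(nat \<Rightarrow> nat \<Rightarrow> nat) \<Rightarrow> nat \<Rightarrow> nat list \<Rightarrow> shape \<Rightarrow> bool" where
  "rainbow_shape col t S w \<longleftrightarrow> valid_shape t w \<and> set S \<subseteq> set (shape_verts w) \<and>
     distinct (map (\<lambda>(s, v). col s v) (shape_edges w))"

lemma rainbow_S_tree_shape:
  assumes "rainbow_shape col t S w"
  shows "rainbow_S_tree (K2t t) (pair_coloring col) (set S) (shape_graph w)"
proof -
  have valid: "valid_shape t w" and distinct: "distinct (map (\<lambda>(s, v). col s v) (shape_edges w))"
    and S: "set S \<subseteq> set (shape_verts w)"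
    using assms unfolding rainbow_shape_def by auto
  have "inj_on (\<lambda>(s, v). col s v) (set (shape_edges w))"
    using distinct by (simp add: distinct_map)
  moreover have "(pair_coloring col \<circ> (\<lambda>(s, v). {s, v})) p = (\<lambda>(s, v). col s v) p"
    if "p \<in> set (shape_edges w)" for p
    using valid_shape_edges[OF valid, of "fst p" "snd p"] that
    by (cases p) (simp add: pair_coloring_doubleton)
  ultimately have "inj_on (pair_coloring col \<circ> (\<lambda>(s, v). {s, v})) (set (shape_edges w))"
    using inj_on_cong by blast
  then have "inj_on (pair_coloring col) (edges (shape_graph w))"
    unfolding edges_shape_graph by (rule inj_on_imageI)
  then show ?thesis
    using valid_shape_tree[OF valid] S unfolding rainbow_S_tree_def verts_shape_graph by blast
qed

text \<open>A search space only: every candidate is rechecked by \<open>rainbow_shape\<close>.\<close>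
definition candidate_shapes :: "nat \<Rightarrow> nat list \<Rightarrow> shape list" where
  "candidate_shapes t L = [Star 0 L, Star 1 L] @
     [Double_Star x (l # A) (filter (\<lambda>v. v \<notin> set A) (removeAll l L)) l.
        x \<leftarrow> [0, 1], l \<leftarrow> [2..<t+2], A \<leftarrow> subseqs (removeAll l L)]"

definition increasing_triples :: "nat \<Rightarrow> (nat \<times> nat \<times> nat) list" where
  "increasing_triples n = [(i, j, k). k \<leftarrow> [0..<n], j \<leftarrow> [0..<k], i \<leftarrow> [0..<j]]"

lemma increasing_triples_mem: "i < j \<Longrightarrow> j < k \<Longrightarrow> k < n \<Longrightarrow> (i, j, k) \<in> set (increasing_triples n)"
  unfolding increasing_triples_def by force

definition rainbow_certified :: "nat \<Rightarrow> (nat \<Rightarrow> nat \<Rightarrow> nat) \<Rightarrow> bool" where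
  "rainbow_certified t col \<longleftrightarrow> (\<forall>(i, j, k) \<in> set (increasing_triples (t+2)).
     \<exists>w \<in> set (candidate_shapes t (filter ((\<le>) 2) [i, j, k])). rainbow_shape col t [i, j, k] w)"

lemma card_3_increasing:
  fixes S :: "nat set"
  assumes "card S = 3"
  obtains i j k where "S = {i, j, k}" "i < j" "j < k"
proof -
  define L where "L = sorted_list_of_set S"
  have "finite S" using assms by (metis card.infinite zero_neq_numeral)
  then have L: "set L = S" "sorted_wrt (<) L" "length L = 3"
    using assms unfolding L_def by simp_all
  then obtain i j k where "L = [i, j, k]"
    by (auto simp: numeral_3_eq_3 length_Suc_conv)
  then show thesis using that L by auto
qed

lemma three_rainbow_coloring_if_certified:
  assumes "rainbow_certified t col"
  shows "three_rainbow_coloring (K2t t) (pair_coloring col)"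
  unfolding three_rainbow_coloring_def
proof (intro allI impI)
  fix S assume S: "S \<subseteq> verts (K2t t) \<and> card S = 3"
  then obtain i j k where ijk: "S = {i, j, k}" "i < j" "j < k" using card_3_increasing by metis
  then have "(i, j, k) \<in> set (increasing_triples (t+2))"
    using S by (auto simp: increasing_triples_mem K2t_verts)
  then obtain w where "rainbow_shape col t [i, j, k] w"
    using assms unfolding rainbow_certified_def by fastforce
  then have "rainbow_S_tree (K2t t) (pair_coloring col) {i, j, k} (shape_graph w)"
    using rainbow_S_tree_shape by fastforce
  then show "\<exists>T. rainbow_S_tree (K2t t) (pair_coloring col) S T"
    unfolding ijk(1) by blast
qed

text \<open>Leaf \<open>v\<close> sees the colour pair \<open>(table_col 0 v, table_col 1 v)\<close>; the eight pairs are the two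
  orientations of each edge of the 4-cycle 0--1--3--2--0 on the colours.\<close>
definition table_col :: "nat \<Rightarrow> nat \<Rightarrow> nat" where
  "table_col s v = (if s = 0 then [0, 0, 1, 1, 2, 2, 3, 3] else [1, 2, 0, 3, 0, 3, 1, 2]) ! (v - 2)"

lemma rainbow_certified_table_col:
  "rainbow_certified 5 table_col" "rainbow_certified 6 table_col"
  "rainbow_certified 7 table_col" "rainbow_certified 8 table_col"
  by code_simp+

lemma table_col_lt_4: "2 \<le> v \<Longrightarrow> v < 10 \<Longrightarrow> table_col s v < 4"
proof -
  assume "2 \<le> v" "v < 10"
  then have "v - 2 \<in> {0, 1, 2, 3, 4, 5, 6, 7}" by auto
  then show ?thesis by (auto simp: table_col_def)
qed

lemma card_table_coloring:
  assumes "5 \<le> t" "t \<le> 8"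
  shows "card (pair_coloring table_col ` edges (K2t t)) = 4"
proof -
  have "pair_coloring table_col ` edges (K2t t) \<subseteq> {..<4}"
    using assms table_col_lt_4 by (auto simp: K2t_edges pair_coloring_doubleton)
  moreover have "pair_coloring table_col {s, v} \<in> pair_coloring table_col ` edges (K2t t)"
    if "s \<le> 1" "2 \<le> v" "v \<le> 6" for s v
    using that assms by (intro imageI K2t_edgeI) auto
  from this[of 0 2] this[of 0 4] this[of 0 6] this[of 1 5]
  have "{..<4} \<subseteq> pair_coloring table_col ` edges (K2t t)"
    by (auto simp: pair_coloring_doubleton table_col_def lessThan_nat_numeral)
  ultimately show ?thesis by (metis card_lessThan subset_antisym)
qed

lemma three_rainbow_coloring_table_col:
  assumes "5 \<le> t" "t \<le> 8"
  shows "three_rainbow_coloring (K2t t) (pair_coloring table_col)"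
proof -
  have "t \<in> {5, 6, 7, 8}" using assms by auto
  then have "rainbow_certified t table_col" using rainbow_certified_table_col by auto
  then show ?thesis by (rule three_rainbow_coloring_if_certified)
qed

section \<open>Colour patterns of leaf triples\<close>

lemma length_le_card_if_distinct: "finite C \<Longrightarrow> set L \<subseteq> C \<Longrightarrow> distinct L \<Longrightarrow> length L \<le> card C"
  by (metis card_mono distinct_card)

lemma obtain_three_distinct:
  assumes "finite R" "3 \<le> card R"
  obtains x y z where "x \<in> R" "y \<in> R" "z \<in> R" "distinct [x, y, z]"
proof -
  obtain S where "S \<subseteq> R" "card S = 3" using obtain_subset_with_card_n[OF assms(2)] by blast
  then show thesis using that by (auto simp: card_3_iff)
qed

lemma card_le_mult_if_fibres_le:
  assumes "f ` W \<subseteq> C" "finite C" "\<And>x. card {w\<in>W. f w = x} \<le> m"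
  shows "card W \<le> card C * m"
proof -
  have "W = (\<Union>x\<in>C. {w\<in>W. f w = x})" using assms(1) by auto
  then have "card W \<le> (\<Sum>x\<in>C. card {w\<in>W. f w = x})"
    by (metis card_UN_le assms(2))
  also have "\<dots> \<le> card C * m"
    using sum_bounded_above[of C "\<lambda>x. card {w\<in>W. f w = x}" m] assms(3) by simp
  finally show ?thesis .
qed

text \<open>\<open>bridged a b m j k\<close> is the colour pattern of a rainbow tree through both centres with
  bridge leaf \<open>m\<close>: the two edges at \<open>m\<close> and one edge at each of \<open>j\<close>, \<open>k\<close>.\<close>
definition bridged :: "('v \<Rightarrow> 'c) \<Rightarrow> ('v \<Rightarrow> 'c) \<Rightarrow> 'v \<Rightarrow> 'v \<Rightarrow> 'v \<Rightarrow> bool" where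
  "bridged a b m j k \<longleftrightarrow> (\<exists>x\<in>{a j, b j}. \<exists>y\<in>{a k, b k}. distinct [a m, b m, x, y])"

definition rainbow_triple :: "('v \<Rightarrow> 'c) \<Rightarrow> ('v \<Rightarrow> 'c) \<Rightarrow> 'v \<Rightarrow> 'v \<Rightarrow> 'v \<Rightarrow> bool" where
  "rainbow_triple a b i j k \<longleftrightarrow> distinct [a i, a j, a k] \<or> distinct [b i, b j, b k] \<or>
     bridged a b i j k \<or> bridged a b j i k \<or> bridged a b k i j"

definition rainbow_triples :: "('v \<Rightarrow> 'c) \<Rightarrow> ('v \<Rightarrow> 'c) \<Rightarrow> 'v set \<Rightarrow> bool" where
  "rainbow_triples a b W \<longleftrightarrow>
     (\<forall>i\<in>W. \<forall>j\<in>W. \<forall>k\<in>W. distinct [i, j, k] \<longrightarrow> rainbow_triple a b i j k)"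

lemma bridged_swap: "bridged b a m j k \<longleftrightarrow> bridged a b m j k"
proof -
  have "distinct [b m, a m, x, y] \<longleftrightarrow> distinct [a m, b m, x, y]" for x y by auto
  moreover have "{b p, a p} = {a p, b p}" for p by (rule insert_commute)
  ultimately show ?thesis unfolding bridged_def by simp
qed

lemma rainbow_triple_swap: "rainbow_triple b a i j k \<longleftrightarrow> rainbow_triple a b i j k"
  using bridged_swap[of a b] unfolding rainbow_triple_def by blast

lemma rainbow_triples_swap: "rainbow_triples a b W \<Longrightarrow> rainbow_triples b a W"
  unfolding rainbow_triples_def by (simp add: rainbow_triple_swap)

lemma rainbow_triples_subset: "rainbow_triples a b W \<Longrightarrow> R \<subseteq> W \<Longrightarrow> rainbow_triples a b R"
  unfolding rainbow_triples_def by blast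

lemma rainbow_triple_constant_first:
  "rainbow_triple a b i j k \<Longrightarrow> a i = a j \<Longrightarrow> a j = a k \<Longrightarrow> b i \<noteq> b j"
  unfolding rainbow_triple_def bridged_def by auto

lemma rainbow_triple_three_colours:
  assumes "rainbow_triple a b i j k" "card C \<le> 3" "finite C" "{a i, a j, a k, b i, b j, b k} \<subseteq> C"
  shows "distinct [a i, a j, a k] \<or> distinct [b i, b j, b k]"
proof -
  have no_bridge: "\<not> bridged a b m p q" if "{a m, b m, a p, b p, a q, b q} \<subseteq> C" for m p q
  proof
    assume "bridged a b m p q"
    then obtain x y where "x \<in> {a p, b p}" "y \<in> {a q, b q}" "distinct [a m, b m, x, y]"
      unfolding bridged_def by blast
    then show False
      using length_le_card_if_distinct[OF assms(3), of "[a m, b m, x, y]"] that assms(2) by auto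
  qed
  show ?thesis
    using no_bridge[of i j k] no_bridge[of j i k] no_bridge[of k i j] assms(1,4)
    unfolding rainbow_triple_def by auto
qed

lemma inj_on_if_rainbow_triples:
  assumes "rainbow_triples a b R" "\<And>i j. i \<in> R \<Longrightarrow> j \<in> R \<Longrightarrow> a i = a j"
    "finite R" "3 \<le> card R"
  shows "inj_on b R"
proof (rule inj_onI, rule ccontr)
  fix i j assume ij: "i \<in> R" "j \<in> R" "b i = b j" "i \<noteq> j"
  have "card (R - {i, j}) = card R - 2"
    using ij assms(3) by (subst card_Diff_subset) auto
  then have "card (R - {i, j}) \<noteq> 0" using assms(4) by linarith
  then obtain k where k: "k \<in> R" "k \<noteq> i" "k \<noteq> j" by (metis card.empty ex_in_conv DiffE insertCI)
  have "rainbow_triple a b i j k"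
    using assms(1) ij k unfolding rainbow_triples_def by auto
  moreover have "a i = a j" "a j = a k" using assms(2)[of i j] assms(2)[of j k] ij k by simp_all
  ultimately have "b i \<noteq> b j" by (rule rainbow_triple_constant_first)
  with ij(3) show False by simp
qed

lemma rainbow_triples_first_or_second:
  assumes "rainbow_triples a b W" "finite C" "card C \<le> 3" "a ` W \<subseteq> C" "b ` W \<subseteq> C"
    "i \<in> W" "j \<in> W" "k \<in> W" "distinct [i, j, k]"
  shows "distinct [a i, a j, a k] \<or> distinct [b i, b j, b k]"
proof -
  have "rainbow_triple a b i j k" using assms(1,6-9) unfolding rainbow_triples_def by blast
  moreover have "{a i, a j, a k, b i, b j, b k} \<subseteq> C" using assms(4-8) by auto
  ultimately show ?thesis by (rule rainbow_triple_three_colours[OF _ assms(3,2)])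
qed

lemma card_le_4_if_three_colours:
  assumes C: "finite C" "card C \<le> 3" and col: "a ` W \<subseteq> C" "b ` W \<subseteq> C"
    and W: "finite W" and rb: "rainbow_triples a b W"
  shows "card W \<le> 4"
proof (rule ccontr)
  assume "\<not> card W \<le> 4"
  then have W5: "5 \<le> card W" by simp
  note split = rainbow_triples_first_or_second[OF rb C col]
  have no4: "\<not> distinct L" if "set L \<subseteq> C" "length L = 4" for L
    using length_le_card_if_distinct[OF C(1) that(1)] that(2) C(2) by auto
  have "\<not> inj_on a W"
    using card_inj_on_le[OF _ col(1) C(1)] W5 C(2) by auto
  then obtain i j where ij: "i \<in> W" "j \<in> W" "i \<noteq> j" "a i = a j"
    unfolding inj_on_def by blast
  let ?Y = "W - {i, j}"
  have "card ?Y = card W - 2" using ij W by (subst card_Diff_subset) auto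
  then have "3 \<le> card ?Y" using W5 by simp
  then obtain y1 y2 y3 where y: "y1 \<in> ?Y" "y2 \<in> ?Y" "y3 \<in> ?Y" "distinct [y1, y2, y3]"
    using obtain_three_distinct[of ?Y] W by blast
  have b_ij: "distinct [b i, b j, b y]" if "y \<in> ?Y" for y
    using split[of i j y] ij that by auto
  have b_const: "b y = b y'" if "y \<in> ?Y" "y' \<in> ?Y" for y y'
  proof (rule ccontr)
    assume "b y \<noteq> b y'"
    then have "distinct [b i, b j, b y, b y']" using b_ij[OF that(1)] b_ij[OF that(2)] by auto
    moreover have "set [b i, b j, b y, b y'] \<subseteq> C" using col ij that by auto
    ultimately show False using no4[of "[b i, b j, b y, b y']"] by simp
  qed
  have "distinct [a y1, a y2, a y3]"
    using split[of y1 y2 y3] y b_const[of y1 y2] b_const[of y2 y3] by auto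
  moreover have "set [a i, a y1, a y2, a y3] \<subseteq> C" using col ij y by auto
  ultimately have "a i \<in> {a y1, a y2, a y3}" using no4[of "[a i, a y1, a y2, a y3]"] by auto
  then obtain y y' where yy': "y \<in> ?Y" "y' \<in> ?Y" "y \<noteq> y'" "a i = a y"
    using y by auto
  then have "distinct [a i, a y, a y'] \<or> distinct [b i, b y, b y']"
    using split[of i y y'] ij by auto
  then show False using yy' b_const[of y y'] by auto
qed

lemma rainbow_triples_bridge_colours:
  assumes "rainbow_triples a b W" "p \<in> W" "q \<in> W" "r \<in> W" "z \<in> W" "distinct [p, q, r, z]"
    "a p = a q" "a q = a r" "distinct [b p, b q, b r]" "a z \<noteq> a p" "b z = b p"
  shows "distinct [a p, b p, b q, b r, a z]"
proof -
  have "rainbow_triple a b p q z" "rainbow_triple a b p r z" "rainbow_triple a b q r z"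
    using assms(1-6) unfolding rainbow_triples_def by auto
  then show ?thesis using assms(7-11) unfolding rainbow_triple_def bridged_def by auto
qed

lemma card_le_if_rainbow_triples_constant:
  assumes "rainbow_triples a b R" "\<And>i j. i \<in> R \<Longrightarrow> j \<in> R \<Longrightarrow> a i = a j"
    "finite R" "b ` R \<subseteq> C" "finite C"
  shows "card R \<le> max 2 (card C)"
proof (cases "3 \<le> card R")
  case True
  have "inj_on b R" using inj_on_if_rainbow_triples[OF assms(1) assms(2) assms(3) True] .
  then show ?thesis using card_inj_on_le[OF _ assms(4,5)] by simp
qed simp

lemma rainbow_triples_second_constant:
  assumes C: "finite C" "card C \<le> 4" and col: "a ` W \<subseteq> C" "b ` W \<subseteq> C"
    and rb: "rainbow_triples a b W"
    and i: "i1 \<in> W" "i2 \<in> W" "i3 \<in> W" "distinct [i1, i2, i3]" "a i1 = a0" "a i2 = a0" "a i3 = a0"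
      "distinct [b i1, b i2, b i3]"
    and z: "z \<in> W" "z' \<in> W" "a z \<noteq> a0" "a z' \<noteq> a0"
  shows "b z = b z'"
proof -
  have no5: "\<not> distinct L" if "set L \<subseteq> C" "length L = 5" for L
    using length_le_card_if_distinct[OF C(1) that(1)] that(2) C(2) by auto
  have b_out: "b z \<notin> {b i1, b i2, b i3}" if z: "z \<in> W" "a z \<noteq> a0" for z
  proof
    assume "b z \<in> {b i1, b i2, b i3}"
    then obtain p q r where pqr: "(p, q, r) \<in> {(i1, i2, i3), (i2, i1, i3), (i3, i1, i2)}" "b z = b p"
      by auto
    then have pqr_W: "p \<in> W" "q \<in> W" "r \<in> W" and "distinct [p, q, r, z]"
      "a p = a q" "a q = a r" "distinct [b p, b q, b r]" "a z \<noteq> a p"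
      using i z by auto
    then have "distinct [a p, b p, b q, b r, a z]"
      using rainbow_triples_bridge_colours[OF rb, of p q r z] z pqr(2) by simp
    moreover have "set [a p, b p, b q, b r, a z] \<subseteq> C"
      using col z pqr_W by auto
    ultimately show False using no5[of "[a p, b p, b q, b r, a z]"] by simp
  qed
  show ?thesis
  proof (rule ccontr)
    assume "b z \<noteq> b z'"
    then have "distinct [b i1, b i2, b i3, b z, b z']"
      using b_out[of z] b_out[of z'] i(8) z by auto
    moreover have "set [b i1, b i2, b i3, b z, b z'] \<subseteq> C" using col i z by auto
    ultimately show False using no5[of "[b i1, b i2, b i3, b z, b z']"] by simp
  qed
qed

lemma card_le_8_if_four_colours:
  assumes C: "finite C" "card C \<le> 4" and col: "a ` W \<subseteq> C" "b ` W \<subseteq> C"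
    and W: "finite W" and rb: "rainbow_triples a b W"
  shows "card W \<le> 8"
proof (cases "\<exists>a0. 3 \<le> card {w\<in>W. a w = a0}")
  case False
  then have "card {w\<in>W. a w = x} \<le> 2" for x
    by (metis less_Suc_eq_le not_le numeral_3_eq_3 numeral_2_eq_2)
  then have "card W \<le> card C * 2" by (rule card_le_mult_if_fibres_le[OF col(1) C(1)])
  then show ?thesis using C(2) by simp
next
  case True
  then obtain a0 where R3: "3 \<le> card {w\<in>W. a w = a0}" by blast
  define R where "R = {w\<in>W. a w = a0}"
  have RW: "R \<subseteq> W" and fin_R: "finite R" and a_R: "\<And>w. w \<in> R \<Longrightarrow> a w = a0"
    and out: "\<And>w. w \<in> W - R \<Longrightarrow> a w \<noteq> a0"
    using W unfolding R_def by auto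
  have a_const: "a i = a j" if "i \<in> R" "j \<in> R" for i j
    using a_R[OF that(1)] a_R[OF that(2)] by simp
  have rb_R: "rainbow_triples a b R" by (rule rainbow_triples_subset[OF rb RW])
  have "inj_on b R"
    by (rule inj_on_if_rainbow_triples[OF rb_R a_const fin_R R3[folded R_def]])
  moreover obtain i1 i2 i3 where i: "i1 \<in> R" "i2 \<in> R" "i3 \<in> R" "distinct [i1, i2, i3]"
    using obtain_three_distinct[OF fin_R R3[folded R_def]] by blast
  ultimately have b_i: "distinct [b i1, b i2, b i3]" by (auto dest: inj_onD)
  have b_const: "b z = b z'" if "z \<in> W - R" "z' \<in> W - R" for z z'
    by (rule rainbow_triples_second_constant[OF C col rb _ _ _ _ _ _ _ b_i])
      (use i RW a_R out[OF that(1)] out[OF that(2)] that in auto)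
  have "card R \<le> 4"
    using card_le_if_rainbow_triples_constant[OF rb_R a_const fin_R _ C(1)] col(2) RW C(2) by fastforce
  moreover have "card (W - R) \<le> 4"
    using card_le_if_rainbow_triples_constant[OF rainbow_triples_swap[OF rainbow_triples_subset[OF rb]]
        b_const finite_Diff[OF W] _ C(1)] col(1) C(2) by fastforce
  moreover have "card W = card R + card (W - R)"
    using RW W fin_R by (simp add: card_Diff_subset card_mono)
  ultimately show ?thesis by simp
qed

section \<open>Rainbow trees through three leaves\<close>

lemma K2t_adj:
  assumes "subgraph T (K2t t)" "adj T p q"
  shows "(p \<le> 1 \<and> 2 \<le> q) \<or> (q \<le> 1 \<and> 2 \<le> p)"
proof -
  have "{p, q} \<in> edges (K2t t)" using assms unfolding subgraph_def adj_def by auto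
  then obtain s v where "{p, q} = {s, v}" "s \<le> 1" "2 \<le> v" unfolding K2t_edges by blast
  then show ?thesis by (auto simp: doubleton_eq_iff)
qed

lemma K2t_centres_joined:
  assumes sub: "subgraph T (K2t t)" and path: "(adj T)\<^sup>*\<^sup>* 0 1"
  obtains l where "adj T 0 l" "adj T l 1"
proof -
  have "v = 0 \<or> (2 \<le> v \<and> adj T 0 v) \<or> (\<exists>l. adj T 0 l \<and> adj T l 1)"
    if "(adj T)\<^sup>*\<^sup>* 0 v" for v
    using that
  proof (induction rule: rtranclp_induct)
    case (step v v')
    note vv' = K2t_adj[OF sub step.hyps(2)]
    from step.IH show ?case
    proof (elim disjE)
      assume "v = 0"
      then show ?case using step.hyps(2) vv' by auto
    next
      assume v: "2 \<le> v \<and> adj T 0 v"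
      then have "v' = 0 \<or> v' = 1" using vv' by auto
      then show ?case using step.hyps(2) v by auto
    qed blast
  qed simp
  from this[OF path] have "\<exists>l. adj T 0 l \<and> adj T l 1" by simp
  then show thesis using that by blast
qed

lemma K2t_leaf_edge:
  assumes sub: "subgraph T (K2t t)" and conn: "connected_graph T"
    and w: "w \<in> verts T" "2 \<le> w" and w': "w' \<in> verts T" "w' \<noteq> w"
  obtains s where "s \<le> 1" "{s, w} \<in> edges T"
proof -
  have "(adj T)\<^sup>*\<^sup>* w w'" using conn w w' unfolding connected_graph_def by blast
  then obtain z where z: "adj T w z" using w'(2) by (metis converse_rtranclpE)
  then have "z \<le> 1" using K2t_adj[OF sub z] w by auto
  moreover have "{z, w} \<in> edges T" using z unfolding adj_def by (simp add: insert_commute)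
  ultimately show thesis by (rule that)
qed

lemma distinct_colours_of_pairs:
  assumes "inj_on c E" "distinct P" "\<And>p v. (p, v) \<in> set P \<Longrightarrow> p \<le> (1::nat) \<and> 2 \<le> v \<and> {p, v} \<in> E"
  shows "distinct (map (\<lambda>(p, v). c {p, v}) P)"
proof -
  have "inj_on (\<lambda>(p, v). c {p, v}) (set P)"
  proof (rule inj_onI, clarify)
    fix p v q w assume pv: "(p, v) \<in> set P" "(q, w) \<in> set P" "c {p, v} = c {q, w}"
    then have "{p, v} = {q, w}" using assms(1,3) by (blast dest: inj_onD)
    then show "p = q \<and> v = w" using assms(3)[OF pv(1)] assms(3)[OF pv(2)] by (auto simp: doubleton_eq_iff)
  qed
  then show ?thesis using assms(2) by (simp add: distinct_map)
qed

lemma rainbow_tree_leaf_triple: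
  fixes c :: "nat set \<Rightarrow> nat"
  assumes T: "rainbow_S_tree (K2t t) c {i, j, k} T"
    and leaves: "2 \<le> i" "2 \<le> j" "2 \<le> k" "distinct [i, j, k]"
  shows "rainbow_triple (\<lambda>w. c {0, w}) (\<lambda>w. c {1, w}) i j k \<or> 5 \<le> card (c ` edges (K2t t))"
proof -
  let ?a = "\<lambda>w. c {0, w}" and ?b = "\<lambda>w. c {1, w}"
  have sub: "subgraph T (K2t t)" and tree: "is_tree T" and S: "{i, j, k} \<subseteq> verts T"
    and inj: "inj_on c (edges T)"
    using T unfolding rainbow_S_tree_def by auto
  have conn: "connected_graph T" using tree unfolding is_tree_def by blast
  have "\<exists>s\<le>1. {s, w} \<in> edges T" if w: "w \<in> {i, j, k}" for w
  proof -
    obtain w' where "w' \<in> {i, j, k}" "w' \<noteq> w" using leaves(4) w by auto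
    then show ?thesis using K2t_leaf_edge[OF sub conn] S w leaves by (metis insert_iff singletonD subsetD)
  qed
  then obtain s where s: "\<And>w. w \<in> {i, j, k} \<Longrightarrow> s w \<le> 1 \<and> {s w, w} \<in> edges T"
    by metis
  have s_vert: "s w \<in> verts T" if "w \<in> {i, j, k}" for w
    using s[OF that] sub unfolding subgraph_def by blast
  note colours = distinct_colours_of_pairs[OF inj]
  consider (no1) "1 \<notin> verts T" | (no0) "0 \<notin> verts T" | (both) "0 \<in> verts T" "1 \<in> verts T"
    by blast
  then show ?thesis
  proof cases
    case no1
    then have "s w = 0" if "w \<in> {i, j, k}" for w
      using s[OF that] s_vert[OF that] by (cases "s w") auto
    then have "distinct (map (\<lambda>(p, v). c {p, v}) [(0, i), (0, j), (0, k)])"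
      using s leaves by (intro colours) auto
    then show ?thesis unfolding rainbow_triple_def by simp
  next
    case no0
    then have "s w = 1" if "w \<in> {i, j, k}" for w
      using s[OF that] s_vert[OF that] by (cases "s w") auto
    then have "distinct (map (\<lambda>(p, v). c {p, v}) [(1, i), (1, j), (1, k)])"
      using s leaves by (intro colours) auto
    then show ?thesis unfolding rainbow_triple_def by simp
  next
    case both
    then obtain l where "adj T 0 l" "adj T l 1"
      using K2t_centres_joined[OF sub] conn unfolding connected_graph_def by blast
    then have l: "{0, l} \<in> edges T" "{1, l} \<in> edges T" "2 \<le> l"
      using K2t_adj[OF sub] unfolding adj_def by (auto simp: insert_commute)
    show ?thesis
    proof (cases "l \<in> {i, j, k}")
      case True
      have bridge: "bridged ?a ?b l p q" if "p \<in> {i, j, k}" "q \<in> {i, j, k}" "distinct [l, p, q]" for p q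
      proof -
        have "distinct (map (\<lambda>(p, v). c {p, v}) [(0, l), (1, l), (s p, p), (s q, q)])"
          using l s[OF that(1)] s[OF that(2)] that leaves by (intro colours) auto
        then have "distinct [?a l, ?b l, c {s p, p}, c {s q, q}]" by simp
        moreover have "c {s w, w} \<in> {?a w, ?b w}" if "w \<in> {i, j, k}" for w
          using s[OF that] by (cases "s w") auto
        ultimately show ?thesis using that unfolding bridged_def by blast
      qed
      from True consider "l = i" | "l = j" | "l = k" by blast
      then have "bridged ?a ?b i j k \<or> bridged ?a ?b j i k \<or> bridged ?a ?b k i j"
        using bridge[of j k] bridge[of i k] bridge[of i j] leaves(4) by cases simp_all
      then show ?thesis unfolding rainbow_triple_def by blast
    next
      case False
      let ?P = "[(0, l), (1, l), (s i, i), (s j, j), (s k, k)]"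
      have "distinct (map (\<lambda>(p, v). c {p, v}) ?P)"
        using l s leaves False by (intro colours) auto
      moreover have "set (map (\<lambda>(p, v). c {p, v}) ?P) \<subseteq> c ` edges (K2t t)"
        using l s sub unfolding subgraph_def by auto
      ultimately have "length (map (\<lambda>(p, v). c {p, v}) ?P) \<le> card (c ` edges (K2t t))"
        using length_le_card_if_distinct[OF finite_imageI[OF finite_K2t_edges]] by blast
      then show ?thesis by simp
    qed
  qed
qed

lemma rainbow_triples_K2t_leaves:
  assumes rc: "three_rainbow_coloring (K2t t) c" and few: "card (c ` edges (K2t t)) \<le> 4"
  shows "rainbow_triples (\<lambda>w. c {0, w}) (\<lambda>w. c {1, w}) {2..<t+2}"
  unfolding rainbow_triples_def
proof (intro ballI impI)
  fix i j k assume ijk: "i \<in> {2..<t+2}" "j \<in> {2..<t+2}" "k \<in> {2..<t+2}" "distinct [i, j, k]"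
  then have "{i, j, k} \<subseteq> verts (K2t t)" "card {i, j, k} = 3" by (auto simp: K2t_verts)
  then obtain T where "rainbow_S_tree (K2t t) c {i, j, k} T"
    using rc unfolding three_rainbow_coloring_def by blast
  then show "rainbow_triple (\<lambda>w. c {0, w}) (\<lambda>w. c {1, w}) i j k"
    using rainbow_tree_leaf_triple ijk few by fastforce
qed

lemma K2t_leaf_colours:
  "(\<lambda>w. c {0, w}) ` {2..<t+2} \<subseteq> c ` edges (K2t t)"
  "(\<lambda>w. c {1, w}) ` {2..<t+2} \<subseteq> c ` edges (K2t t)"
  by (auto intro!: imageI K2t_edgeI)

lemma card_colours_K2t_ge_4:
  assumes "5 \<le> t" "three_rainbow_coloring (K2t t) c"
  shows "4 \<le> card (c ` edges (K2t t))"
proof (rule ccontr)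
  assume "\<not> ?thesis"
  then have "card (c ` edges (K2t t)) \<le> 3" by simp
  then have "card {2..<t+2} \<le> 4"
    using rainbow_triples_K2t_leaves[OF assms(2)]
    by (intro card_le_4_if_three_colours[OF finite_imageI[OF finite_K2t_edges] _ K2t_leaf_colours]) auto
  then show False using assms(1) by simp
qed

lemma card_colours_K2t_ge_5:
  assumes "9 \<le> t" "three_rainbow_coloring (K2t t) c"
  shows "5 \<le> card (c ` edges (K2t t))"
proof (rule ccontr)
  assume "\<not> ?thesis"
  then have "card (c ` edges (K2t t)) \<le> 4" by simp
  then have "card {2..<t+2} \<le> 8"
    using rainbow_triples_K2t_leaves[OF assms(2)]
    by (intro card_le_8_if_four_colours[OF finite_imageI[OF finite_K2t_edges] _ K2t_leaf_colours]) auto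
  then show False using assms(1) by simp
qed

theorem lemma4:
  shows "(\<forall>t::nat. 5 \<le> t \<and> t \<le> 8 \<longrightarrow> rx3 (K2t t) = 4) \<and>
         (\<forall>t::nat. t \<ge> 9 \<longrightarrow> rx3 (K2t t) \<ge> 5)"
proof (intro conjI allI impI)
  fix t :: nat assume t: "5 \<le> t \<and> t \<le> 8"
  then have table: "three_rainbow_coloring (K2t t) (pair_coloring table_col)"
    by (intro three_rainbow_coloring_table_col) auto
  have "rx3 (K2t t) \<le> 4"
    using rx3_le[OF table] card_table_coloring t by simp
  moreover have "4 \<le> rx3 (K2t t)"
    using le_rx3[OF table] card_colours_K2t_ge_4 t by blast
  ultimately show "rx3 (K2t t) = 4" by simp
next
  fix t :: nat assume t: "9 \<le> t"
  then obtain c where "three_rainbow_coloring (K2t t) c"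
    using ex_three_rainbow_coloring_K2t by (metis le_trans one_le_numeral)
  then show "5 \<le> rx3 (K2t t)"
    using le_rx3 card_colours_K2t_ge_5 t by blast
qed

end
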